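(* Let $T$ be a tree on $n$ vertices. If there is a leaf $v$ of $T$ with $|N_2(v)|\le\lceil n/2\rceil-4$, then $\operatorname{diam}(\mathcal{C}_3(T))\ge\lfloor 3n/2\rfloor+1$.
   Context: For a vertex $v$ of a tree, $N_i(v)$ is the set of vertices at distance exactly $i$ from $v$. A proper 3-coloring of a tree $T=(V,E)$ is a map $f\colon V\to\mathbb{Z}/3\mathbb{Z}$ with $f(u)\neq f(v)$ for every edge $uv\in E$. The 3-coloring graph $\mathcal{C}_3(T)$ has the proper 3-colorings as vertices, two colorings adjacent iff they differ at exactly one vertex; $\operatorname{diam}$ denotes graph diameter. *)

theory Defs
  imports Complex_Main
begin

definition graph :: "'a set \<Rightarrow> 'a set set \<Rightarrow> bool" where
  "graph V E \<longleftrightarrow> finite V \<and> (\<forall>e\<in>E. \<exists>u v. u \<in> V \<and> v \<in> V \<and> u \<noteq> v \<and> e = {u, v})"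

definition walk :: "'a set \<Rightarrow> 'a set set \<Rightarrow> 'a list \<Rightarrow> bool" where
  "walk V E p \<longleftrightarrow> p \<noteq> [] \<and> set p \<subseteq> V \<and> (\<forall>i. Suc i < length p \<longrightarrow> {p ! i, p ! Suc i} \<in> E)"

definition connected_graph :: "'a set \<Rightarrow> 'a set set \<Rightarrow> bool" where
  "connected_graph V E \<longleftrightarrow> (\<forall>u\<in>V. \<forall>v\<in>V. \<exists>p. walk V E p \<and> hd p = u \<and> last p = v)"

definition has_cycle :: "'a set \<Rightarrow> 'a set set \<Rightarrow> bool" where
  "has_cycle V E \<longleftrightarrow> (\<exists>p. walk V E p \<and> length p \<ge> 3 \<and> distinct p \<and> {last p, hd p} \<in> E)"

definition tree :: "'a set \<Rightarrow> 'a set set \<Rightarrow> bool" where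
  "tree V E \<longleftrightarrow> graph V E \<and> V \<noteq> {} \<and> connected_graph V E \<and> \<not> has_cycle V E"

definition degree :: "'a set set \<Rightarrow> 'a \<Rightarrow> nat" where
  "degree E v = card {e\<in>E. v \<in> e}"

definition leaf :: "'a set \<Rightarrow> 'a set set \<Rightarrow> 'a \<Rightarrow> bool" where
  "leaf V E v \<longleftrightarrow> v \<in> V \<and> degree E v = 1"

definition dist :: "'a set \<Rightarrow> 'a set set \<Rightarrow> 'a \<Rightarrow> 'a \<Rightarrow> nat" where
  "dist V E u v = (LEAST k. \<exists>p. walk V E p \<and> hd p = u \<and> last p = v \<and> length p = Suc k)"

definition sphere :: "'a set \<Rightarrow> 'a set set \<Rightarrow> nat \<Rightarrow> 'a \<Rightarrow> 'a set" where
  "sphere V E i v = {u\<in>V. dist V E v u = i}"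

text \<open>Proper 3-colourings, with colours in {0,1,2} (representing Z/3Z);
  colourings are functions V -> {0,1,2}, taken extensional (value 0 outside V)
  so that each colouring of V corresponds to exactly one HOL function.\<close>
definition proper3 :: "'a set \<Rightarrow> 'a set set \<Rightarrow> ('a \<Rightarrow> nat) \<Rightarrow> bool" where
  "proper3 V E f \<longleftrightarrow> (\<forall>v\<in>V. f v < 3) \<and> (\<forall>v. v \<notin> V \<longrightarrow> f v = 0)
     \<and> (\<forall>u v. {u, v} \<in> E \<longrightarrow> f u \<noteq> f v)"

definition colourings :: "'a set \<Rightarrow> 'a set set \<Rightarrow> ('a \<Rightarrow> nat) set" where
  "colourings V E = {f. proper3 V E f}"

definition col_adj :: "'a set \<Rightarrow> ('a \<Rightarrow> nat) \<Rightarrow> ('a \<Rightarrow> nat) \<Rightarrow> bool" where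
  "col_adj V f g \<longleftrightarrow> card {v\<in>V. f v \<noteq> g v} = 1"

definition col_graph_edges :: "'a set \<Rightarrow> 'a set set \<Rightarrow> ('a \<Rightarrow> nat) set set" where
  "col_graph_edges V E = {{f, g} | f g. f \<in> colourings V E \<and> g \<in> colourings V E \<and> col_adj V f g}"

text \<open>Diameter of a finite graph (supremum of distances between vertex pairs;
  pairs are assumed connected, which holds for C_3 of a tree).\<close>
definition diam :: "'b set \<Rightarrow> 'b set set \<Rightarrow> nat" where
  "diam V E = Sup {dist V E u v | u v. u \<in> V \<and> v \<in> V}"

end

(* A proper 3-colouring of a tree is the residue mod 3 of a height function, an integer
   labelling that changes by exactly 1 along every edge, and on a connected graph two
   height functions with the same residues differ by a constant multiple of 3.
   Recolouring a single vertex moves its height by 2 and keeps all other heights, so a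
   path of length K in C_3(T) from the colouring of h_a to the colouring of h_b lifts to
   a height function H = h_b + c with 3 dvd c, H - h_a even and sum |H - h_a| <= 2K.
   When h_b - h_a = 2D, parity forces c = 6t, hence K >= sum |D x + 3t| for some integer t.
   (That C_3(T) is connected, so that K is attained, follows by peeling off a deepest leaf.)

   With d the distance from the leaf v, take h_b = d and h_a = d - 2D, where D is -1 at v,
   0 at its neighbour and 1 elsewhere, plus 1 on a set S of floor(n/2) + 2 vertices at
   distance at least 3 which is closed upwards along d, so that d - 2D is again a height
   function. The bound on |N_2(v)| leaves enough vertices at distance at least 3 to choose
   S, and for every t the sum above is then at least floor(3n/2) + 1. *)

theory Submission
  imports Defs
begin

section \<open>Walks, distances and geodesics\<close>

lemma successively_append_overlap:
  "successively P (xs @ [y]) \<Longrightarrow> successively P (y # ys) \<Longrightarrow> successively P (xs @ y # ys)"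
  by (auto simp: successively_append_iff successively_Cons)

lemma walk_iff_successively:
  "walk V E p \<longleftrightarrow> p \<noteq> [] \<and> set p \<subseteq> V \<and> successively (\<lambda>a b. {a, b} \<in> E) p"
  by (auto simp: walk_def successively_conv_nth)

lemma walk_snoc_iff:
  "p \<noteq> [] \<Longrightarrow> walk V E (p @ [b]) \<longleftrightarrow> walk V E p \<and> b \<in> V \<and> {last p, b} \<in> E"
  by (auto simp: walk_iff_successively successively_append_iff)

lemma walk_append:
  "walk V E p \<Longrightarrow> walk V E q \<Longrightarrow> {last p, hd q} \<in> E \<Longrightarrow> walk V E (p @ q)"
  by (auto simp: walk_iff_successively successively_append_iff)

lemma walk_append_via:
  assumes p: "walk V E p" and q: "walk V E q" and mid: "set mid \<subseteq> V"
    and link: "successively (\<lambda>a b. {a, b} \<in> E) (last p # mid @ [hd q])"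
  shows "walk V E (p @ mid @ q)"
proof -
  obtain B x where B: "p = B @ [x]"
    using p by (cases p rule: rev_exhaust) (auto simp: walk_def)
  obtain y C where C: "q = y # C"
    using q by (cases q) (auto simp: walk_def)
  have "successively (\<lambda>a b. {a, b} \<in> E) ((x # mid) @ y # C)"
    using successively_append_overlap[of _ "x # mid" y C] link p q B C
    by (simp add: walk_iff_successively)
  then have "successively (\<lambda>a b. {a, b} \<in> E) (B @ x # mid @ y # C)"
    using successively_append_overlap[of _ B x "mid @ y # C"] p B
    by (simp add: walk_iff_successively)
  then show ?thesis
    using p q mid B C by (simp add: walk_iff_successively)
qed

lemma walk_take: "walk V E p \<Longrightarrow> 0 < n \<Longrightarrow> walk V E (take n p)"
  by (auto simp: walk_iff_successively dest: in_set_takeD)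
    (metis append_take_drop_id successively_append_iff)

lemma walk_drop: "walk V E p \<Longrightarrow> n < length p \<Longrightarrow> walk V E (drop n p)"
  by (auto simp: walk_iff_successively dest: in_set_dropD)
    (metis append_take_drop_id successively_append_iff)

lemma walk_rev: "walk V E (rev p) \<longleftrightarrow> walk V E p"
  by (auto simp: walk_iff_successively insert_commute)

lemma walk_edge_invariant:
  assumes "walk V E p" and "\<And>a b. {a, b} \<in> E \<Longrightarrow> F a = F b"
  shows "F (last p) = F (hd p)"
proof -
  have "successively (\<lambda>a b. {a, b} \<in> E) p" "p \<noteq> []"
    using assms(1) by (simp_all add: walk_iff_successively)
  then show ?thesis
    by (induction p rule: induct_list012) (auto dest: assms(2))
qed

lemma graph_edgeD: "graph V E \<Longrightarrow> {a, b} \<in> E \<Longrightarrow> a \<in> V \<and> b \<in> V \<and> a \<noteq> b"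
  unfolding graph_def by (metis doubleton_eq_iff insert_absorb2 insert_not_empty singleton_insert_inj_eq)

lemma graph_delete_vertex: "graph V E \<Longrightarrow> graph (V - {x}) {e \<in> E. x \<notin> e}"
  unfolding graph_def by fastforce

lemma dist_le_walk: "walk V E p \<Longrightarrow> dist V E (hd p) (last p) \<le> length p - 1"
  unfolding dist_def by (rule Least_le) (auto simp: walk_def)

lemma dist_witness:
  assumes "walk V E p"
  obtains q where "walk V E q" "hd q = hd p" "last q = last p"
    "length q = Suc (dist V E (hd p) (last p))"
proof -
  have "\<exists>k q. walk V E q \<and> hd q = hd p \<and> last q = last p \<and> length q = Suc k"
    using assms by (intro exI[of _ "length p - 1"] exI[of _ p]) (auto simp: walk_def)
  then have "\<exists>q. walk V E q \<and> hd q = hd p \<and> last q = last p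
      \<and> length q = Suc (dist V E (hd p) (last p))"
    unfolding dist_def by (rule LeastI_ex)
  then show ?thesis
    using that by blast
qed

lemma dist_le_diam:
  assumes "finite V" "u \<in> V" "w \<in> V"
  shows "dist V E u w \<le> diam V E"
proof -
  have "{dist V E u v | u v. u \<in> V \<and> v \<in> V} = (\<lambda>(u, v). dist V E u v) ` (V \<times> V)"
    by auto
  then show ?thesis
    unfolding diam_def using assms by (intro le_cSup_finite) auto
qed

lemma dist_self: "v \<in> V \<Longrightarrow> dist V E v v = 0"
  using dist_le_walk[of V E "[v]"] by (simp add: walk_def)

lemma dist_edge_le:
  assumes "walk V E p" "{last p, y} \<in> E" "y \<in> V"
  shows "dist V E (hd p) y \<le> Suc (dist V E (hd p) (last p))"
proof -
  obtain q where q: "walk V E q" "hd q = hd p" "last q = last p"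
    "length q = Suc (dist V E (hd p) (last p))"
    using dist_witness[OF assms(1)] .
  have "q \<noteq> []"
    using q(1) by (simp add: walk_def)
  moreover have "walk V E (q @ [y])"
    using q assms \<open>q \<noteq> []\<close> by (simp add: walk_snoc_iff)
  ultimately show ?thesis
    using dist_le_walk[of V E "q @ [y]"] q(2,4) by simp
qed

definition geodesic :: "'a set \<Rightarrow> 'a set set \<Rightarrow> 'a list \<Rightarrow> bool" where
  "geodesic V E p \<longleftrightarrow> walk V E p \<and> (\<forall>i<length p. dist V E (hd p) (p ! i) = i)"

lemma geodesic_length: "geodesic V E p \<Longrightarrow> length p = Suc (dist V E (hd p) (last p))"
  unfolding geodesic_def walk_def by (metis diff_Suc_1 last_conv_nth length_greater_0_conv
      Suc_pred lessI)

lemma shortest_walk_geodesic: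
  assumes p: "walk V E p" and len: "length p = Suc (dist V E (hd p) (last p))"
  shows "geodesic V E p"
  unfolding geodesic_def
proof (intro conjI allI impI p)
  fix i assume i: "i < length p"
  let ?v = "hd p"
  have prefix: "walk V E (take (Suc i) p)" "hd (take (Suc i) p) = ?v"
    by (simp_all add: walk_take[OF p])
  have prefix_last: "last (take (Suc i) p) = p ! i"
    using i by (simp add: take_Suc_conv_app_nth)
  obtain q where q: "walk V E q" "hd q = ?v" "last q = p ! i"
    "length q = Suc (dist V E ?v (p ! i))"
    using dist_witness[OF prefix(1)] prefix(2) prefix_last by metis
  define r where "r = q @ drop (Suc i) p"
  have r: "walk V E r \<and> last r = last p"
  proof (cases "Suc i = length p")
    case True
    then have "p ! i = last p"
      by (metis diff_Suc_1 last_conv_nth list.size(3) nat.distinct(1))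
    then show ?thesis
      using q True by (simp add: r_def)
  next
    case False
    then have "{last q, hd (drop (Suc i) p)} \<in> E"
      using p q(3) i by (auto simp: walk_def hd_drop_conv_nth)
    then show ?thesis
      using walk_append[OF q(1) walk_drop[OF p]] False i by (simp add: r_def)
  qed
  moreover have "hd r = ?v"
    using q by (simp add: r_def walk_def)
  ultimately have "dist V E ?v (last p) \<le> length r - 1"
    using dist_le_walk by metis
  then have "i \<le> dist V E ?v (p ! i)"
    using len q(4) i by (simp add: r_def)
  moreover have "dist V E ?v (p ! i) \<le> i"
    using dist_le_walk[OF prefix(1)] prefix(2) prefix_last i by simp
  ultimately show "dist V E ?v (p ! i) = i"
    by simp
qed

lemma obtain_geodesic:
  assumes "connected_graph V E" "u \<in> V" "x \<in> V"
  obtains p where "geodesic V E p" "hd p = u" "last p = x"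
proof -
  obtain p where "walk V E p" "hd p = u" "last p = x"
    using assms unfolding connected_graph_def by blast
  with dist_witness[OF this(1)] shortest_walk_geodesic that show ?thesis
    by metis
qed

lemma geodesic_nth_eq_imp_eq:
  assumes "geodesic V E P" "geodesic V E Q" "hd P = hd Q"
    and "i < length P" "j < length Q" "P ! i = Q ! j"
  shows "i = j"
  using assms unfolding geodesic_def by metis

lemma geodesic_distinct: "geodesic V E P \<Longrightarrow> distinct P"
  unfolding distinct_conv_nth by (metis geodesic_nth_eq_imp_eq)

lemma geodesics_branch_point:
  assumes P: "geodesic V E P" and Q: "geodesic V E Q" and hd: "hd P = hd Q"
    and len: "length P = Suc k" "length Q = Suc k" and ends: "last P \<noteq> last Q"
  obtains a where "a < k" "P ! a = Q ! a" "set (drop a P) \<inter> set (drop (Suc a) Q) = {}"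
proof -
  define A where "A = {i. i \<le> k \<and> P ! i = Q ! i}"
  have "finite A"
    by (simp add: A_def)
  moreover have "0 \<in> A"
    using hd len by (simp add: A_def hd_conv_nth flip: length_greater_0_conv)
  ultimately have a: "Max A \<in> A" and above: "\<And>i. i \<in> A \<Longrightarrow> i \<le> Max A"
    using Max_in by auto
  have "Max A \<noteq> k"
    using a ends len by (auto simp: A_def last_conv_nth simp flip: length_greater_0_conv)
  then have "Max A < k"
    using a by (simp add: A_def)
  moreover have "set (drop (Max A) P) \<inter> set (drop (Suc (Max A)) Q) = {}"
  proof (rule ccontr)
    assume "set (drop (Max A) P) \<inter> set (drop (Suc (Max A)) Q) \<noteq> {}"
    then obtain i j where ij: "i < Suc k - Max A" "j < k - Max A"
      "P ! (Max A + i) = Q ! Suc (Max A + j)"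
      using len by (auto simp: in_set_conv_nth) (metis add_Suc_right)
    then have "Max A + i = Suc (Max A + j)"
      using geodesic_nth_eq_imp_eq[OF P Q hd] len by simp
    with ij have "Max A + i \<in> A"
      by (simp add: A_def)
    with above \<open>Max A + i = Suc (Max A + j)\<close> show False
      by fastforce
  qed
  ultimately show ?thesis
    using that a by (simp add: A_def)
qed

lemma geodesics_joined_has_cycle:
  assumes P: "geodesic V E P" and Q: "geodesic V E Q" and hd: "hd P = hd Q"
    and len: "length P = length Q" and ends: "last P \<noteq> last Q"
    and mid: "distinct mid" "set mid \<inter> (set P \<union> set Q) = {}" "set mid \<subseteq> V"
      "successively (\<lambda>a b. {a, b} \<in> E) (last P # mid @ [last Q])"
  shows "has_cycle V E"
proof -
  obtain k where k: "length P = Suc k" "length Q = Suc k"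
    using P len by (cases P) (auto simp: geodesic_def walk_def)
  obtain a where a: "a < k" "P ! a = Q ! a" and disj: "set (drop a P) \<inter> set (drop (Suc a) Q) = {}"
    using geodesics_branch_point[OF P Q hd k ends] .
  define R where "R = rev (drop (Suc a) Q)"
  define L where "L = drop a P @ mid @ R"
  have wP: "walk V E (drop a P)" and wR: "walk V E R"
    using P Q a k by (auto simp: geodesic_def R_def walk_rev intro: walk_drop)
  have ends_R: "hd R = last Q" "last R = Q ! Suc a"
    using a k by (simp_all add: R_def hd_rev last_rev hd_drop_conv_nth)
  have "walk V E L"
    using walk_append_via[OF wP wR mid(3)] mid(4) ends_R a k by (simp add: L_def)
  moreover have "distinct L"
    using geodesic_distinct[OF P] geodesic_distinct[OF Q] disj mid(1,2)
      set_drop_subset[of a P] set_drop_subset[of "Suc a" Q]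
    unfolding L_def R_def by (simp add: distinct_append) blast
  moreover have "3 \<le> length L"
    using a k by (simp add: L_def R_def)
  moreover have "{last L, hd L} \<in> E"
  proof -
    have "{Q ! a, Q ! Suc a} \<in> E"
      using Q a k by (simp add: geodesic_def walk_def)
    moreover have "hd L = Q ! a" "last L = Q ! Suc a"
      using a k ends_R wR by (auto simp: L_def hd_drop_conv_nth walk_def)
    ultimately show ?thesis
      by (simp add: insert_commute)
  qed
  ultimately show ?thesis
    unfolding has_cycle_def by blast
qed

lemma geodesic_dist_less: "geodesic V E P \<Longrightarrow> x \<in> set P \<Longrightarrow> dist V E (hd P) x < length P"
  unfolding geodesic_def by (metis in_set_conv_nth)

section \<open>Distances in trees\<close>

lemma tree_dist_edge:
  assumes tr: "tree V E" and v: "v \<in> V" and e: "{x, y} \<in> E"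
  shows "dist V E v y = Suc (dist V E v x) \<or> dist V E v x = Suc (dist V E v y)"
proof -
  have conn: "connected_graph V E" and xy: "x \<in> V" "y \<in> V" "x \<noteq> y"
    using tr graph_edgeD[OF _ e] by (auto simp: tree_def)
  obtain P where P: "geodesic V E P" "hd P = v" "last P = x"
    using obtain_geodesic[OF conn v xy(1)] .
  obtain Q where Q: "geodesic V E Q" "hd Q = v" "last Q = y"
    using obtain_geodesic[OF conn v xy(2)] .
  have "dist V E v x \<noteq> dist V E v y"
  proof
    assume "dist V E v x = dist V E v y"
    then have "length P = length Q"
      using P Q geodesic_length by metis
    then have "has_cycle V E"
      using geodesics_joined_has_cycle[OF P(1) Q(1), of "[]"] P Q xy e by simp
    with tr show False
      by (simp add: tree_def)
  qed
  moreover have "dist V E v y \<le> Suc (dist V E v x)" "dist V E v x \<le> Suc (dist V E v y)"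
    using dist_edge_le[of V E P y] dist_edge_le[of V E Q x] P Q xy e
    by (auto simp: geodesic_def insert_commute)
  ultimately show ?thesis
    by linarith
qed

definition unique_parents :: "'a set set \<Rightarrow> ('a \<Rightarrow> nat) \<Rightarrow> bool" where
  "unique_parents E d \<longleftrightarrow>
    (\<forall>x y z. {x, y} \<in> E \<longrightarrow> {x, z} \<in> E \<longrightarrow> d y \<le> d x \<longrightarrow> d z \<le> d x \<longrightarrow> y = z)"

lemma tree_unique_parents:
  assumes tr: "tree V E" and v: "v \<in> V"
  shows "unique_parents E (dist V E v)"
  unfolding unique_parents_def
proof (intro allI impI, rule ccontr)
  fix x y z assume e: "{x, y} \<in> E" "{x, z} \<in> E"
    and below: "dist V E v y \<le> dist V E v x" "dist V E v z \<le> dist V E v x" and "y \<noteq> z"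
  have conn: "connected_graph V E" and xyz: "x \<in> V" "y \<in> V" "z \<in> V"
    using tr graph_edgeD[OF _ e(1)] graph_edgeD[OF _ e(2)] by (auto simp: tree_def)
  have parent: "dist V E v x = Suc (dist V E v y)" "dist V E v x = Suc (dist V E v z)"
    using tree_dist_edge[OF tr v e(1)] tree_dist_edge[OF tr v e(2)] below by auto
  obtain P where P: "geodesic V E P" "hd P = v" "last P = y"
    using obtain_geodesic[OF conn v xyz(2)] .
  obtain Q where Q: "geodesic V E Q" "hd Q = v" "last Q = z"
    using obtain_geodesic[OF conn v xyz(3)] .
  have "length P = Suc (dist V E v y)" "length Q = Suc (dist V E v z)"
    using P Q geodesic_length by metis+
  then have "x \<notin> set P" "x \<notin> set Q" "length P = length Q"
    using geodesic_dist_less[OF P(1), of x] geodesic_dist_less[OF Q(1), of x] P(2) Q(2) parent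
    by auto
  then have "has_cycle V E"
    using geodesics_joined_has_cycle[OF P(1) Q(1), of "[x]"] P Q xyz e \<open>y \<noteq> z\<close>
    by (simp add: insert_commute)
  with tr show False
    by (simp add: tree_def)
qed

lemma dist_eq_0_iff:
  assumes "connected_graph V E" "v \<in> V" "x \<in> V"
  shows "dist V E v x = 0 \<longleftrightarrow> x = v"
proof -
  obtain P where "geodesic V E P" "hd P = v" "last P = x"
    using obtain_geodesic[OF assms] .
  then show ?thesis
    using geodesic_length[of V E P] dist_self[OF assms(2)] by (cases P) auto
qed

lemma dist_eq_1_imp_edge:
  assumes "connected_graph V E" "v \<in> V" "x \<in> V" "dist V E v x = 1"
  shows "{v, x} \<in> E"
proof -
  obtain P where P: "geodesic V E P" "hd P = v" "last P = x"
    using obtain_geodesic[OF assms(1-3)] .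
  then obtain a b where "P = [a, b]"
    using geodesic_length[OF P(1)] assms(4) by (metis One_nat_def length_0_conv length_Suc_conv)
  then show ?thesis
    using P by (auto simp: geodesic_def walk_def)
qed

section \<open>Connectivity of the colouring graph\<close>

definition recolouring :: "'a set \<Rightarrow> 'a set set \<Rightarrow> ('a \<Rightarrow> nat) \<Rightarrow> ('a \<Rightarrow> nat) \<Rightarrow> bool" where
  "recolouring V E f g \<longleftrightarrow> proper3 V E f \<and> proper3 V E g \<and> col_adj V f g"

lemma col_adj_commute: "col_adj V f g \<longleftrightarrow> col_adj V g f"
proof -
  have "{v \<in> V. f v \<noteq> g v} = {v \<in> V. g v \<noteq> f v}"
    by auto
  then show ?thesis
    by (simp add: col_adj_def)
qed

lemma col_graph_edges_iff: "{f, g} \<in> col_graph_edges V E \<longleftrightarrow> recolouring V E f g"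
proof
  assume "{f, g} \<in> col_graph_edges V E"
  then obtain f' g' where "{f, g} = {f', g'}" "recolouring V E f' g'"
    by (auto simp: col_graph_edges_def recolouring_def colourings_def)
  then show "recolouring V E f g"
    by (auto simp: doubleton_eq_iff recolouring_def col_adj_commute)
qed (auto simp: col_graph_edges_def recolouring_def colourings_def)

lemma recolouring_walk:
  assumes "(recolouring V E)\<^sup>*\<^sup>* f g" "proper3 V E f"
  shows "\<exists>p. walk (colourings V E) (col_graph_edges V E) p \<and> hd p = f \<and> last p = g"
  using assms(1)
proof (induction rule: rtranclp_induct)
  case base
  show ?case
    using assms(2) by (intro exI[of _ "[f]"]) (simp add: walk_def colourings_def)
next
  case (step g h)
  then obtain p where p: "walk (colourings V E) (col_graph_edges V E) p" "hd p = f" "last p = g"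
    by blast
  moreover have "p \<noteq> []"
    using p(1) by (simp add: walk_def)
  ultimately show ?case
    using step(2) by (intro exI[of _ "p @ [h]"])
      (simp add: walk_snoc_iff col_graph_edges_iff recolouring_def colourings_def)
qed

lemma proper3_delete_vertex:
  "proper3 V E h \<Longrightarrow> proper3 (V - {x}) {e \<in> E. x \<notin> e} (h(x := 0))"
  unfolding proper3_def by auto

lemma proper3_add_vertex:
  assumes g: "graph V E" and x: "x \<in> V" and h: "proper3 (V - {x}) {e \<in> E. x \<notin> e} h"
    and c: "c < 3" "\<forall>y. {x, y} \<in> E \<longrightarrow> h y \<noteq> c"
  shows "proper3 V E (h(x := c))"
  unfolding proper3_def
proof (intro conjI allI impI ballI)
  fix a b assume e: "{a, b} \<in> E"
  show "(h(x := c)) a \<noteq> (h(x := c)) b"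
  proof (cases "a = x \<or> b = x")
    case True
    then show ?thesis
      using graph_edgeD[OF g e] c(2) e by (auto simp: insert_commute)
  next
    case False
    then show ?thesis
      using h e by (auto simp: proper3_def)
  qed
qed (use h c x in \<open>auto simp: proper3_def\<close>)

lemma col_adj_fun_upd_vertex:
  assumes "x \<in> V" "c \<noteq> c'"
  shows "col_adj V (h(x := c)) (h(x := c'))"
proof -
  have "{w \<in> V. (h(x := c)) w \<noteq> (h(x := c')) w} = {x}"
    using assms by auto
  then show ?thesis
    by (simp add: col_adj_def)
qed

lemma col_adj_fun_upd:
  assumes "col_adj (V - {x}) f g"
  shows "col_adj V (f(x := c)) (g(x := c))"
proof -
  have "{w \<in> V. (f(x := c)) w \<noteq> (g(x := c)) w} = {w \<in> V - {x}. f w \<noteq> g w}"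
    by auto
  then show ?thesis
    using assms by (simp add: col_adj_def)
qed

lemma recolouring_change_vertex:
  assumes "x \<in> V" "proper3 V E (h(x := c))" "proper3 V E (h(x := c'))"
  shows "(recolouring V E)\<^sup>*\<^sup>* (h(x := c)) (h(x := c'))"
  using assms col_adj_fun_upd_vertex[OF assms(1), of c c' h]
  by (cases "c = c'") (auto simp: recolouring_def)

lemma third_colour: "\<exists>c::nat. c < 3 \<and> c \<noteq> a \<and> c \<noteq> b"
  by (rule exI[of _ "if a \<noteq> 0 \<and> b \<noteq> 0 then 0 else if a \<noteq> 1 \<and> b \<noteq> 1 then 1 else 2"]) auto

lemma recolouring_lift_pendant:
  assumes g: "graph V E" and x: "x \<in> V"
    and pendant: "\<And>y z. {x, y} \<in> E \<Longrightarrow> {x, z} \<in> E \<Longrightarrow> y = z"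
    and steps: "(recolouring (V - {x}) {e \<in> E. x \<notin> e})\<^sup>*\<^sup>* (f(x := 0)) h"
    and f: "proper3 V E f"
  obtains c where "proper3 V E (h(x := c))" "(recolouring V E)\<^sup>*\<^sup>* f (h(x := c))"
  using steps
proof (induction arbitrary: thesis rule: rtranclp_induct)
  case base
  then show ?case
    using f by (metis fun_upd_triv fun_upd_upd rtranclp.rtrancl_refl)
next
  case (step h1 h2)
  obtain c1 where c1: "proper3 V E (h1(x := c1))" "(recolouring V E)\<^sup>*\<^sup>* f (h1(x := c1))"
    using step.IH by blast
  have h12: "proper3 (V - {x}) {e \<in> E. x \<notin> e} h1" "proper3 (V - {x}) {e \<in> E. x \<notin> e} h2"
    "col_adj (V - {x}) h1 h2"
    using step.hyps(2) by (auto simp: recolouring_def)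
  \<comment> \<open>x has at most one neighbour, so some colour of x is compatible with both h1 and h2\<close>
  obtain c2 where c2: "c2 < 3" "\<forall>y. {x, y} \<in> E \<longrightarrow> h1 y \<noteq> c2 \<and> h2 y \<noteq> c2"
  proof (cases "\<exists>y. {x, y} \<in> E")
    case True
    then obtain p where "{x, p} \<in> E"
      by blast
    with third_colour[of "h1 p" "h2 p"] pendant that show ?thesis
      by metis
  qed (use that[of 0] in auto)
  have proper: "proper3 V E (h1(x := c2))" "proper3 V E (h2(x := c2))"
    using proper3_add_vertex[OF g x h12(1) c2(1)] proper3_add_vertex[OF g x h12(2) c2(1)] c2(2)
    by auto
  have "(recolouring V E)\<^sup>*\<^sup>* (h1(x := c1)) (h1(x := c2))"
    using recolouring_change_vertex[OF x c1(1) proper(1)] .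
  moreover have "recolouring V E (h1(x := c2)) (h2(x := c2))"
    using proper col_adj_fun_upd[OF h12(3)] by (simp add: recolouring_def)
  ultimately show ?case
    using step.prems proper(2) c1(2) by (meson rtranclp.rtrancl_into_rtrancl rtranclp_trans)
qed

lemma obtain_pendant_vertex:
  fixes d :: "'a \<Rightarrow> nat"
  assumes g: "graph V E" and "V \<noteq> {}" and parents: "unique_parents E d"
  obtains x where "x \<in> V" "\<And>y z. {x, y} \<in> E \<Longrightarrow> {x, z} \<in> E \<Longrightarrow> y = z"
proof -
  have fin: "finite V"
    using g by (simp add: graph_def)
  with \<open>V \<noteq> {}\<close> have "Max (d ` V) \<in> d ` V"
    by simp
  then obtain x where x: "x \<in> V" "d x = Max (d ` V)"
    by auto
  have "y = z" if "{x, y} \<in> E" "{x, z} \<in> E" for y z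
    using parents that x fin graph_edgeD[OF g that(1)] graph_edgeD[OF g that(2)]
    by (simp add: unique_parents_def)
  with x(1) that show ?thesis
    by blast
qed

lemma recolouring_connected:
  fixes d :: "'a \<Rightarrow> nat"
  assumes "graph V E" and "unique_parents E d" and "proper3 V E f" "proper3 V E g"
  shows "(recolouring V E)\<^sup>*\<^sup>* f g"
  using assms
proof (induction "card V" arbitrary: V E f g)
  case 0
  then have "V = {}"
    by (simp add: graph_def)
  with "0.prems"(3,4) have "f = g"
    by (auto simp: proper3_def)
  then show ?case
    by simp
next
  case (Suc m)
  have "V \<noteq> {}"
    using Suc.hyps(2) by auto
  then obtain x where x: "x \<in> V" and pendant: "\<And>y z. {x, y} \<in> E \<Longrightarrow> {x, z} \<in> E \<Longrightarrow> y = z"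
    using obtain_pendant_vertex[OF Suc.prems(1) _ Suc.prems(2)] by blast
  have card': "m = card (V - {x})"
    using Suc.hyps(2) Suc.prems(1) x by (simp add: graph_def)
  have "unique_parents {e \<in> E. x \<notin> e} d"
    using Suc.prems(2) unfolding unique_parents_def by blast
  then have "(recolouring (V - {x}) {e \<in> E. x \<notin> e})\<^sup>*\<^sup>* (f(x := 0)) (g(x := 0))"
    using Suc.hyps(1)[OF card' graph_delete_vertex[OF Suc.prems(1)]]
      proper3_delete_vertex[OF Suc.prems(3)] proper3_delete_vertex[OF Suc.prems(4)] by blast
  then obtain c where "proper3 V E ((g(x := 0))(x := c))"
    "(recolouring V E)\<^sup>*\<^sup>* f ((g(x := 0))(x := c))"
    using recolouring_lift_pendant[OF Suc.prems(1) x pendant _ Suc.prems(3)] by blast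
  moreover have "proper3 V E ((g(x := 0))(x := g x))"
    using Suc.prems(4) by simp
  ultimately show ?case
    using recolouring_change_vertex[OF x] by (metis fun_upd_triv fun_upd_upd rtranclp_trans)
qed

lemma colour_graph_connected:
  assumes tr: "tree V E"
  shows "connected_graph (colourings V E) (col_graph_edges V E)"
  unfolding connected_graph_def
proof (intro ballI)
  fix f g assume "f \<in> colourings V E" "g \<in> colourings V E"
  moreover obtain v where "v \<in> V"
    using tr by (auto simp: tree_def)
  ultimately have "(recolouring V E)\<^sup>*\<^sup>* f g"
    using recolouring_connected[OF _ tree_unique_parents[OF tr \<open>v \<in> V\<close>]] tr
    by (simp add: colourings_def tree_def)
  then show "\<exists>p. walk (colourings V E) (col_graph_edges V E) p \<and> hd p = f \<and> last p = g"
    using recolouring_walk \<open>f \<in> colourings V E\<close> by (simp add: colourings_def)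
qed

lemma finite_colourings: "finite V \<Longrightarrow> finite (colourings V E)"
  by (rule finite_subset[OF _ finite_set_of_finite_funs[of V "{..<3}" 0]])
    (auto simp: colourings_def proper3_def)

section \<open>Height functions\<close>

definition height_fun :: "'a set set \<Rightarrow> ('a \<Rightarrow> int) \<Rightarrow> bool" where
  "height_fun E h \<longleftrightarrow> (\<forall>a b. {a, b} \<in> E \<longrightarrow> \<bar>h a - h b\<bar> = 1)"

definition height_lift :: "'a set \<Rightarrow> 'a set set \<Rightarrow> ('a \<Rightarrow> int) \<Rightarrow> ('a \<Rightarrow> nat) \<Rightarrow> bool" where
  "height_lift V E h f \<longleftrightarrow> height_fun E h \<and> (\<forall>x\<in>V. int (f x) = h x mod 3)"

definition colour_of_height :: "'a set \<Rightarrow> ('a \<Rightarrow> int) \<Rightarrow> 'a \<Rightarrow> nat" where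
  "colour_of_height V h x = (if x \<in> V then nat (h x mod 3) else 0)"

lemma proper3_colour_of_height:
  assumes g: "graph V E" and h: "height_fun E h"
  shows "proper3 V E (colour_of_height V h)"
proof -
  have "h a mod 3 \<noteq> h b mod 3" if "{a, b} \<in> E" for a b
  proof -
    have "\<bar>h a - h b\<bar> = 1"
      using h that unfolding height_fun_def by blast
    then show ?thesis
      by presburger
  qed
  then show ?thesis
    using graph_edgeD[OF g] by (auto simp: proper3_def colour_of_height_def nat_eq_iff2) metis
qed

lemma height_lift_colour_of_height:
  "height_fun E h \<Longrightarrow> height_lift V E h (colour_of_height V h)"
  by (simp add: height_lift_def colour_of_height_def)

lemma height_fun_sub_double:
  assumes h: "height_fun E h"
    and D: "\<And>x y. {x, y} \<in> E \<Longrightarrow> h y = h x + 1 \<Longrightarrow> D y = D x \<or> D y = D x + 1"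
  shows "height_fun E (\<lambda>x. h x - 2 * D x)"
  unfolding height_fun_def
proof (intro allI impI)
  fix a b assume e: "{a, b} \<in> E"
  then have "h b = h a + 1 \<or> h a = h b + 1"
    using h unfolding height_fun_def by fastforce
  then show "\<bar>h a - 2 * D a - (h b - 2 * D b)\<bar> = 1"
    using D[OF e] D[of b a] e by (auto simp: insert_commute)
qed

lemma height_fun_dist: "tree V E \<Longrightarrow> v \<in> V \<Longrightarrow> height_fun E (\<lambda>x. int (dist V E v x))"
  unfolding height_fun_def by (auto dest: tree_dist_edge)

lemma mod3_shift_by_two:
  fixes a c :: int
  assumes "0 \<le> c" "c < 3" "c \<noteq> a mod 3"
  obtains s where "\<bar>s\<bar> = 2" "c = (a + s) mod 3"
proof -
  have "a mod 3 = 0 \<or> a mod 3 = 1 \<or> a mod 3 = 2" "c = 0 \<or> c = 1 \<or> c = 2"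
    using assms(1,2) by arith+
  moreover have "(a + k) mod 3 = (a mod 3 + k) mod 3" "(a - k) mod 3 = (a mod 3 - k) mod 3" for k
    by (simp_all add: mod_add_left_eq mod_diff_left_eq)
  ultimately show ?thesis
    using assms(3) that[of "if c = (a + 1) mod 3 then -2 else 2"] by (elim disjE) simp_all
qed

lemma unit_step_shift_mod3:
  fixes a b s :: int
  assumes "\<bar>a - b\<bar> = 1" "\<bar>s\<bar> = 2" "b mod 3 \<noteq> (a + s) mod 3"
  shows "\<bar>a + s - b\<bar> = 1"
proof -
  have "b = a + 1 \<or> b = a - 1" "s = 2 \<or> s = -2"
    using assms(1,2) by arith+
  moreover have "(a + 2) mod 3 = (a - 1) mod 3" "(a - 2) mod 3 = (a + 1) mod 3"
    using mod_add_self2[of "a - 1" 3] mod_add_self2[of "a - 2" 3] by (simp_all add: algebra_simps)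
  ultimately show ?thesis
    using assms(3) by auto
qed

lemma height_lift_fun_upd:
  assumes g: "graph V E" and H: "height_lift V E H f" and pg: "proper3 V E g"
    and z: "z \<in> V" and same: "\<And>w. w \<in> V \<Longrightarrow> w \<noteq> z \<Longrightarrow> f w = g w"
    and s: "\<bar>s\<bar> = 2" and gz: "int (g z) = (H z + s) mod 3"
  shows "height_lift V E (H(z := H z + s)) g"
proof -
  have moved: "\<bar>H z + s - H y\<bar> = 1" if "y \<in> V" "y \<noteq> z" "{z, y} \<in> E" for y
  proof (rule unit_step_shift_mod3[OF _ s])
    show "\<bar>H z - H y\<bar> = 1"
      using H that(3) by (simp add: height_lift_def height_fun_def)
    have "g y \<noteq> g z"
      using pg that(3) unfolding proper3_def by metis
    then show "H y mod 3 \<noteq> (H z + s) mod 3"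
      using H that(1,2) same[of y] gz by (auto simp: height_lift_def)
  qed
  have "\<bar>(H(z := H z + s)) a - (H(z := H z + s)) b\<bar> = 1" if e: "{a, b} \<in> E" for a b
    using moved[of a] moved[of b] graph_edgeD[OF g e] e H
    by (auto simp: height_lift_def height_fun_def insert_commute abs_minus_commute)
  moreover have "\<forall>x\<in>V. int (g x) = (H(z := H z + s)) x mod 3"
    using H gz same by (auto simp: height_lift_def)
  ultimately show ?thesis
    by (simp add: height_lift_def height_fun_def)
qed

lemma height_lift_recolour:
  assumes g: "graph V E" and H: "height_lift V E H f" and step: "recolouring V E f g"
  obtains H' where "height_lift V E H' g" "\<forall>x\<in>V. even (H' x - H x)"
    "(\<Sum>x\<in>V. \<bar>H' x - H x\<bar>) = 2"
proof -
  have pg: "proper3 V E g" and "card {w \<in> V. f w \<noteq> g w} = 1"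
    using step by (simp_all add: recolouring_def col_adj_def)
  from this(2) obtain z where "{w \<in> V. f w \<noteq> g w} = {z}"
    by (rule card_1_singletonE)
  then have z: "z \<in> V" and "f z \<noteq> g z" and same: "\<And>w. w \<in> V \<Longrightarrow> w \<noteq> z \<Longrightarrow> f w = g w"
    by blast+
  have "int (g z) \<noteq> H z mod 3" "int (g z) < 3"
    using H \<open>f z \<noteq> g z\<close> pg z by (auto simp: height_lift_def proper3_def)
  then obtain s where s: "\<bar>s\<bar> = 2" and gz: "int (g z) = (H z + s) mod 3"
    using mod3_shift_by_two[of "int (g z)" "H z"] by auto
  have "s = 2 \<or> s = -2"
    using s by arith
  then have "even s"
    by auto
  moreover have "(\<Sum>x\<in>V. \<bar>(H(z := H z + s)) x - H x\<bar>) = \<bar>s\<bar>"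
    using g z by (simp add: graph_def sum.remove)
  ultimately show ?thesis
    using that height_lift_fun_upd[OF g H pg z same s gz] s by simp
qed

lemma colour_walk_height_lift:
  assumes g: "graph V E"
  shows "walk (colourings V E) (col_graph_edges V E) p \<Longrightarrow> height_lift V E H0 (hd p) \<Longrightarrow>
    \<exists>H. height_lift V E H (last p) \<and> (\<forall>x\<in>V. even (H x - H0 x))
      \<and> (\<Sum>x\<in>V. \<bar>H x - H0 x\<bar>) \<le> 2 * int (length p - 1)"
proof (induction p rule: rev_induct)
  case Nil
  then show ?case
    by (simp add: walk_def)
next
  case (snoc g' p)
  show ?case
  proof (cases "p = []")
    case True
    with snoc.prems(2) show ?thesis
      by (intro exI[of _ H0]) simp
  next
    case False
    then have p: "walk (colourings V E) (col_graph_edges V E) p"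
      and step: "recolouring V E (last p) g'"
      using snoc.prems(1) by (simp_all add: walk_snoc_iff col_graph_edges_iff)
    obtain H where H: "height_lift V E H (last p)" "\<forall>x\<in>V. even (H x - H0 x)"
      "(\<Sum>x\<in>V. \<bar>H x - H0 x\<bar>) \<le> 2 * int (length p - 1)"
      using snoc.IH[OF p] snoc.prems(2) False by auto
    obtain H' where H': "height_lift V E H' g'" "\<forall>x\<in>V. even (H' x - H x)"
      "(\<Sum>x\<in>V. \<bar>H' x - H x\<bar>) = 2"
      using height_lift_recolour[OF g H(1) step] .
    have "(\<Sum>x\<in>V. \<bar>H' x - H0 x\<bar>) \<le> (\<Sum>x\<in>V. \<bar>H' x - H x\<bar> + \<bar>H x - H0 x\<bar>)"
      by (intro sum_mono) simp
    then have "(\<Sum>x\<in>V. \<bar>H' x - H0 x\<bar>) \<le> 2 * int (length (p @ [g']) - 1)"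
      using H(3) H'(3) False by (simp add: sum.distrib of_nat_diff Suc_le_eq)
    moreover have "\<forall>x\<in>V. even (H' x - H0 x)"
      using H(2) H'(2) by (metis diff_add_cancel even_add)
    ultimately show ?thesis
      using H'(1) by auto
  qed
qed

lemma eq_of_unit_steps_mod3:
  fixes p q r s :: int
  assumes "\<bar>p - q\<bar> = 1" "\<bar>r - s\<bar> = 1" "p mod 3 = r mod 3" "q mod 3 = s mod 3"
  shows "p - r = q - s"
proof (rule ccontr)
  assume "p - r \<noteq> q - s"
  moreover have "3 dvd (p - r) - (q - s)"
    using assms(3,4) by (simp add: mod_eq_dvd_iff dvd_diff)
  ultimately have "\<bar>3\<bar> \<le> \<bar>(p - r) - (q - s)\<bar>"
    by (intro dvd_imp_le_int) simp_all
  with assms(1,2) show False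
    by linarith
qed

lemma height_lifts_diff_const:
  assumes g: "graph V E" and conn: "connected_graph V E"
    and H: "height_lift V E H f" and H': "height_lift V E H' f" and xy: "x \<in> V" "y \<in> V"
  shows "H x - H' x = H y - H' y"
proof -
  obtain p where "walk V E p" "hd p = x" "last p = y"
    using conn xy unfolding connected_graph_def by blast
  moreover have "H a - H' a = H b - H' b" if "{a, b} \<in> E" for a b
    using eq_of_unit_steps_mod3[of "H a" "H b" "H' a" "H' b"] H H' that graph_edgeD[OF g that]
    by (auto simp: height_lift_def height_fun_def)
  ultimately show ?thesis
    using walk_edge_invariant[of V E p "\<lambda>a. H a - H' a"] by metis
qed

lemma colour_walk_length_ge:
  assumes g: "graph V E" and conn: "connected_graph V E" and v: "v \<in> V"
    and ha: "height_fun E ha" and hb: "height_fun E hb" and even: "\<forall>x\<in>V. even (hb x - ha x)"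
    and p: "walk (colourings V E) (col_graph_edges V E) p"
      "hd p = colour_of_height V ha" "last p = colour_of_height V hb"
  obtains t where "(\<Sum>x\<in>V. \<bar>hb x - ha x + 6 * t\<bar>) \<le> 2 * int (length p - 1)"
proof -
  obtain H where H: "height_lift V E H (colour_of_height V hb)" "\<forall>x\<in>V. even (H x - ha x)"
    "(\<Sum>x\<in>V. \<bar>H x - ha x\<bar>) \<le> 2 * int (length p - 1)"
    using colour_walk_height_lift[OF g p(1), of ha] height_lift_colour_of_height[OF ha] p(2,3)
    by metis
  define c where "c = H v - hb v"
  have c: "H x - ha x = hb x - ha x + c" if "x \<in> V" for x
    using height_lifts_diff_const[OF g conn H(1) height_lift_colour_of_height[OF hb] that v]
    by (simp add: c_def)
  have "3 dvd c"
    using H(1) v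
    by (simp add: c_def height_lift_def colour_of_height_def mod_eq_dvd_iff dvd_diff_commute)
  moreover have "2 dvd c"
    using H(2) even v c[OF v] by (metis dvd_add_right_iff)
  ultimately have "6 dvd c"
    by presburger
  then obtain t where "c = 6 * t"
    by (elim dvdE)
  with H(3) c show ?thesis
    using that[of t] by (simp cong: sum.cong)
qed

lemma diam_colour_graph_ge:
  assumes tr: "tree V E" and h: "height_fun E h" and h': "height_fun E (\<lambda>x. h x - 2 * D x)"
    and bound: "\<And>t. int k \<le> (\<Sum>x\<in>V. \<bar>D x + 3 * t\<bar>)"
  shows "k \<le> diam (colourings V E) (col_graph_edges V E)"
proof -
  let ?C = "colourings V E" and ?CE = "col_graph_edges V E"
  let ?\<alpha> = "colour_of_height V (\<lambda>x. h x - 2 * D x)" and ?\<beta> = "colour_of_height V h"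
  have g: "graph V E" and conn: "connected_graph V E"
    using tr by (simp_all add: tree_def)
  obtain v where v: "v \<in> V"
    using tr by (auto simp: tree_def)
  have \<alpha>\<beta>: "?\<alpha> \<in> ?C" "?\<beta> \<in> ?C"
    using proper3_colour_of_height[OF g] h h' by (simp_all add: colourings_def)
  then obtain p where "walk ?C ?CE p" "hd p = ?\<alpha>" "last p = ?\<beta>"
    using colour_graph_connected[OF tr] unfolding connected_graph_def by blast
  then obtain q where q: "walk ?C ?CE q" "hd q = ?\<alpha>" "last q = ?\<beta>"
    "length q = Suc (dist ?C ?CE ?\<alpha> ?\<beta>)"
    using dist_witness by metis
  obtain t where "(\<Sum>x\<in>V. \<bar>h x - (h x - 2 * D x) + 6 * t\<bar>) \<le> 2 * int (length q - 1)"
    using colour_walk_length_ge[OF g conn v h' h _ q(1-3)] by auto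
  moreover have "(\<Sum>x\<in>V. \<bar>h x - (h x - 2 * D x) + 6 * t\<bar>) = 2 * (\<Sum>x\<in>V. \<bar>D x + 3 * t\<bar>)"
    by (simp add: sum_distrib_left) (rule sum.cong; arith)
  ultimately have "k \<le> dist ?C ?CE ?\<alpha> ?\<beta>"
    using bound[of t] q(4) by simp
  also have "\<dots> \<le> diam ?C ?CE"
    using g \<alpha>\<beta> by (intro dist_le_diam finite_colourings) (simp_all add: graph_def)
  finally show ?thesis .
qed

section \<open>The lower bound for a tree with a leaf\<close>

lemma ceiling_half: "\<lceil>real n / 2\<rceil> = int ((n + 1) div 2)"
proof -
  have "n \<le> 2 * ((n + 1) div 2)" "2 * ((n + 1) div 2) \<le> n + 1"
    by presburger+
  then have "real n \<le> 2 * real ((n + 1) div 2)" "2 * real ((n + 1) div 2) \<le> real n + 1"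
    by linarith+
  then show ?thesis
    by (simp add: ceiling_eq_iff)
qed

lemma obtain_upward_closed_subset:
  fixes d :: "'a \<Rightarrow> nat"
  assumes "finite R" "k \<le> card R"
  obtains S where "S \<subseteq> R" "card S = k" "\<And>x y. x \<in> S \<Longrightarrow> y \<in> R \<Longrightarrow> d x < d y \<Longrightarrow> y \<in> S"
  using assms(2)
proof (induction k arbitrary: thesis)
  case 0
  then show ?case
    by (metis card.empty empty_iff empty_subsetI)
next
  case (Suc k)
  then obtain S where S: "S \<subseteq> R" "card S = k" "\<And>x y. x \<in> S \<Longrightarrow> y \<in> R \<Longrightarrow> d x < d y \<Longrightarrow> y \<in> S"
    by auto
  have "R - S \<noteq> {}"
    using S(1,2) Suc.prems(2) by auto
  then obtain y where y: "y \<in> R - S" "d y = Max (d ` (R - S))"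
    using assms(1) by (metis (no_types, lifting) Max_in finite_Diff finite_imageI image_iff image_is_empty)
  have top: "d x \<le> d y" if "x \<in> R - S" for x
    using y assms(1) that by simp
  show ?case
  proof (rule Suc.prems(1))
    show "insert y S \<subseteq> R" "card (insert y S) = Suc k"
      using S y finite_subset[OF S(1) assms(1)] by auto
    show "x' \<in> insert y S" if "x \<in> insert y S" "x' \<in> R" "d x < d x'" for x x'
      using that S(3) top by fastforce
  qed
qed

lemma sum_abs_add_mult3_ge:
  fixes D :: "'a \<Rightarrow> int"
  assumes "\<And>x. x \<in> V \<Longrightarrow> -1 \<le> D x \<and> D x \<le> 2"
  shows "min (\<Sum>x\<in>V. \<bar>D x\<bar>) (\<Sum>x\<in>V. 3 - D x) \<le> (\<Sum>x\<in>V. \<bar>D x + 3 * t\<bar>)"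
proof (cases "0 \<le> t")
  case True
  then have "(\<Sum>x\<in>V. \<bar>D x\<bar>) \<le> (\<Sum>x\<in>V. \<bar>D x + 3 * t\<bar>)"
    using assms by (intro sum_mono) (cases "t = 0"; fastforce)
  then show ?thesis
    by linarith
next
  case False
  then have "(\<Sum>x\<in>V. 3 - D x) \<le> (\<Sum>x\<in>V. \<bar>D x + 3 * t\<bar>)"
    using assms by (intro sum_mono) fastforce
  then show ?thesis
    by linarith
qed

lemma leaf_neighbour:
  assumes g: "graph V E" and leaf: "leaf V E v"
  obtains u where "{v, u} \<in> E" "\<And>y. {v, y} \<in> E \<Longrightarrow> y = u"
proof -
  have "card {e \<in> E. v \<in> e} = 1"
    using leaf by (simp add: leaf_def degree_def)
  then obtain e where e: "{e \<in> E. v \<in> e} = {e}"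
    by (rule card_1_singletonE)
  then have "e \<in> E" "v \<in> e"
    by auto
  then obtain a b where "e = {a, b}"
    using g unfolding graph_def by blast
  with \<open>v \<in> e\<close> obtain u where u: "e = {v, u}"
    by (metis insert_commute insertE singletonD)
  have "y = u" if "{v, y} \<in> E" for y
  proof -
    have "{v, y} \<in> {e \<in> E. v \<in> e}"
      using that by simp
    then have "{v, y} = {v, u}"
      using e u by simp
    then show ?thesis
      by (auto simp: doubleton_eq_iff)
  qed
  moreover have "{v, u} \<in> E"
    using e u by blast
  ultimately show ?thesis
    using that by blast
qed

lemma leaf_dist_le_1_iff:
  assumes tr: "tree V E" and leaf: "leaf V E v" and u: "{v, u} \<in> E" and x: "x \<in> V"
  shows "dist V E v x \<le> 1 \<longleftrightarrow> x = v \<or> x = u"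
proof -
  have g: "graph V E" and conn: "connected_graph V E" and v: "v \<in> V"
    using tr leaf by (simp_all add: tree_def leaf_def)
  obtain u' where nb: "\<And>y. {v, y} \<in> E \<Longrightarrow> y = u'"
    using leaf_neighbour[OF g leaf] by blast
  have "dist V E v u \<le> 1"
    using dist_le_walk[of V E "[v, u]"] graph_edgeD[OF g u] u by (simp add: walk_def)
  moreover have "dist V E v x = 0 \<or> dist V E v x = 1 \<longleftrightarrow> dist V E v x \<le> 1"
    by linarith
  ultimately show ?thesis
    using dist_eq_0_iff[OF conn v x] dist_eq_1_imp_edge[OF conn v x] dist_self[OF v] nb[OF u] nb
    by auto
qed

lemma card_far_from_leaf:
  assumes tr: "tree V E" and leaf: "leaf V E v"
    and sphere: "int (card (sphere V E 2 v)) \<le> \<lceil>real (card V) / 2\<rceil> - 4"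
  shows "card V div 2 + 2 \<le> card {x \<in> V. 3 \<le> dist V E v x}"
proof -
  let ?far = "{x \<in> V. 3 \<le> dist V E v x}"
  have fin: "finite V" and g: "graph V E"
    using tr by (simp_all add: tree_def graph_def)
  obtain u where u: "{v, u} \<in> E"
    using leaf_neighbour[OF g leaf] by blast
  have "V \<subseteq> {v, u} \<union> sphere V E 2 v \<union> ?far"
  proof
    fix x assume "x \<in> V"
    then show "x \<in> {v, u} \<union> sphere V E 2 v \<union> ?far"
      using leaf_dist_le_1_iff[OF tr leaf u \<open>x \<in> V\<close>]
      by (cases "dist V E v x \<le> 1") (auto simp: sphere_def)
  qed
  then have "card V \<le> card ({v, u} \<union> sphere V E 2 v \<union> ?far)"
    using fin by (intro card_mono) (simp_all add: sphere_def)
  also have "\<dots> \<le> card {v, u} + card (sphere V E 2 v) + card ?far"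
    using card_Un_le[of "{v, u} \<union> sphere V E 2 v" ?far] card_Un_le[of "{v, u}" "sphere V E 2 v"]
    by linarith
  finally have "card V \<le> card {v, u} + card (sphere V E 2 v) + card ?far" .
  moreover have "card {v, u} \<le> 2"
    by (simp add: card_insert_if)
  moreover have "card V div 2 + (card V + 1) div 2 = card V"
    by presburger
  ultimately show ?thesis
    using sphere ceiling_half[of "card V"] by linarith
qed

definition level_potential :: "'a set \<Rightarrow> 'a set set \<Rightarrow> 'a \<Rightarrow> 'a set \<Rightarrow> 'a \<Rightarrow> int" where
  "level_potential V E v S x = int (min (dist V E v x) 2) - 1 + of_bool (x \<in> S)"

lemma height_fun_level_potential:
  assumes tr: "tree V E" and v: "v \<in> V"
    and S: "S \<subseteq> {x \<in> V. 3 \<le> dist V E v x}"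
    and up: "\<And>x y. x \<in> S \<Longrightarrow> y \<in> V \<Longrightarrow> dist V E v x < dist V E v y \<Longrightarrow> y \<in> S"
  shows "height_fun E (\<lambda>x. int (dist V E v x) - 2 * level_potential V E v S x)"
proof (rule height_fun_sub_double[OF height_fun_dist[OF tr v]])
  fix x y assume e: "{x, y} \<in> E" and step: "int (dist V E v y) = int (dist V E v x) + 1"
  have "y \<in> V"
    using graph_edgeD[of V E x y] tr e by (simp add: tree_def)
  then show "level_potential V E v S y = level_potential V E v S x
    \<or> level_potential V E v S y = level_potential V E v S x + 1"
    using up[of x y] S step by (auto simp: level_potential_def)
qed

lemma level_potential_at_leaf:
  assumes tr: "tree V E" and leaf: "leaf V E v" and u: "{v, u} \<in> E"
    and S: "S \<subseteq> {x \<in> V. 3 \<le> dist V E v x}"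
  shows "level_potential V E v S v = -1" "level_potential V E v S u = 0"
    "\<And>x. x \<in> V - {v, u} \<Longrightarrow> level_potential V E v S x = 1 + of_bool (x \<in> S)"
proof -
  have v: "v \<in> V" and uV: "u \<in> V" and "u \<noteq> v"
    using tr leaf graph_edgeD[of V E v u] u by (auto simp: tree_def leaf_def)
  then have "dist V E v u = 1"
    using leaf_dist_le_1_iff[OF tr leaf u uV] dist_eq_0_iff[of V E v u] tr
    by (simp add: tree_def)
  then show "level_potential V E v S v = -1" "level_potential V E v S u = 0"
    using S dist_self[OF v] by (auto simp: level_potential_def)
  show "level_potential V E v S x = 1 + of_bool (x \<in> S)" if "x \<in> V - {v, u}" for x
    using leaf_dist_le_1_iff[OF tr leaf u, of x] that by (simp add: level_potential_def)
qed

lemma sum_abs_level_potential_ge: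
  assumes tr: "tree V E" and leaf: "leaf V E v" and S: "S \<subseteq> {x \<in> V. 3 \<le> dist V E v x}"
  shows "min (int (card V) - 1 + int (card S)) (2 * int (card V) + 3 - int (card S))
    \<le> (\<Sum>x\<in>V. \<bar>level_potential V E v S x + 3 * t\<bar>)"
proof -
  let ?D = "level_potential V E v S"
  have g: "graph V E" and fin: "finite V" and v: "v \<in> V"
    using tr leaf by (simp_all add: tree_def graph_def leaf_def)
  obtain u where u: "{v, u} \<in> E"
    using leaf_neighbour[OF g leaf] by blast
  let ?W = "V - {v, u}"
  have uv: "u \<in> V" "u \<noteq> v"
    using graph_edgeD[OF g u] by auto
  note D = level_potential_at_leaf[OF tr leaf u S]
  have split: "(\<Sum>x\<in>V. f x) = f v + f u + (\<Sum>x\<in>?W. f x)" for f :: "'a \<Rightarrow> int"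
    using fin v uv by (simp add: sum.remove Diff_insert2[symmetric])
  have "?W \<inter> {x. x \<in> S} = S"
    using S leaf_dist_le_1_iff[OF tr leaf u v] leaf_dist_le_1_iff[OF tr leaf u uv(1)] by auto
  then have sum_S: "(\<Sum>x\<in>?W. of_bool (x \<in> S)) = int (card S)"
    using fin by simp
  have "(\<Sum>x\<in>?W. \<bar>?D x\<bar>) = (\<Sum>x\<in>?W. 1 + of_bool (x \<in> S))"
    "(\<Sum>x\<in>?W. 3 - ?D x) = (\<Sum>x\<in>?W. 2 - of_bool (x \<in> S))"
    by (auto simp: D(3) intro!: sum.cong)
  moreover have "card ?W = card V - 2" "2 \<le> card V"
    using fin v uv card_mono[OF fin, of "{v, u}"] by (simp_all add: card_Diff_subset)
  ultimately have "(\<Sum>x\<in>V. \<bar>?D x\<bar>) = int (card V) - 1 + int (card S)"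
    "(\<Sum>x\<in>V. 3 - ?D x) = 2 * int (card V) + 3 - int (card S)"
    using split[of "\<lambda>x. \<bar>?D x\<bar>"] split[of "\<lambda>x. 3 - ?D x"] D(1,2) sum_S
    by (simp_all add: sum.distrib sum_subtractf of_nat_diff)
  moreover have "-1 \<le> ?D x \<and> ?D x \<le> 2" for x
    by (simp add: level_potential_def min_def)
  then have "min (\<Sum>x\<in>V. \<bar>?D x\<bar>) (\<Sum>x\<in>V. 3 - ?D x) \<le> (\<Sum>x\<in>V. \<bar>?D x + 3 * t\<bar>)"
    by (intro sum_abs_add_mult3_ge)
  ultimately show ?thesis
    by simp
qed

theorem mainTheorem12:
  fixes V :: "'a set" and E :: "'a set set" and v :: 'a and n :: nat
  assumes "tree V E"
    and "n = card V"
    and "leaf V E v"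
    and "int (card (sphere V E 2 v)) \<le> \<lceil>real n / 2\<rceil> - 4"
  shows "diam (colourings V E) (col_graph_edges V E) \<ge> (3 * n) div 2 + 1"
proof -
  note tr = assms(1) and leaf = assms(3)
  have v: "v \<in> V" and fin: "finite V"
    using tr leaf by (simp_all add: leaf_def tree_def graph_def)
  let ?far = "{x \<in> V. 3 \<le> dist V E v x}"
  have "n div 2 + 2 \<le> card ?far"
    using card_far_from_leaf[OF tr leaf] assms(2,4) by simp
  then obtain S where S: "S \<subseteq> ?far" "card S = n div 2 + 2"
    and up: "\<And>x y. x \<in> S \<Longrightarrow> y \<in> ?far \<Longrightarrow> dist V E v x < dist V E v y \<Longrightarrow> y \<in> S"
    using obtain_upward_closed_subset[of ?far] fin by auto
  let ?D = "level_potential V E v S"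
  have height: "height_fun E (\<lambda>x. int (dist V E v x) - 2 * ?D x)"
    using height_fun_level_potential[OF tr v S(1)] up S(1) by fastforce
  have "int (3 * n div 2 + 1) \<le> (\<Sum>x\<in>V. \<bar>?D x + 3 * t\<bar>)" for t
  proof -
    have "int (3 * n div 2 + 1) \<le> min (int n - 1 + int (card S)) (2 * int n + 3 - int (card S))"
      unfolding S(2) by presburger
    also have "\<dots> \<le> (\<Sum>x\<in>V. \<bar>?D x + 3 * t\<bar>)"
      using sum_abs_level_potential_ge[OF tr leaf S(1)] assms(2) by simp
    finally show ?thesis .
  qed
  then show ?thesis
    using diam_colour_graph_ge[OF tr height_fun_dist[OF tr v] height] by simp
qed

end
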